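(* Let $M$ be a free $\mathbb{Z}$-module of rank $2$ with basis $\{a_1, b_1\}$ and skew-symmetric pairing with $\langle a_1, b_1 \rangle = -1$. Let $c_1, c_2, c_3 \in M$ with $c_1 \equiv a_1 + b_1$, $c_2 \equiv b_1$ and $c_3 \equiv a_1 \pmod{2M}$, and let $n \geq 1$. Then the closed subgroup of $\mathrm{Sp}(M \otimes \mathbb{Z}_2)$ topologically generated by $T_{c_1}^{2^n}, T_{c_2}^{2^n}, T_{c_3}^{2^n}$ coincides with $\Gamma(2^{n})$.
   Context: For $c \in M$, $T_c$ is the transvection $v \mapsto v + \langle v, c\rangle c$ on $M\otimes\mathbb{Z}_2$. $\Gamma(N) = \{\sigma \in \mathrm{Sp}(M\otimes\mathbb{Z}_2) : \sigma \equiv 1 \pmod N\}$. *)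

theory Defs
  imports "HOL-Analysis.Finite_Cartesian_Product" "HOL-Algebra.Group"
begin

definition a1 :: "int ^ 2" where "a1 = axis 1 1"
definition b1 :: "int ^ 2" where "b1 = axis 2 1"

definition pairing :: "int ^ 2 \<Rightarrow> int ^ 2 \<Rightarrow> int" where
  "pairing u v = u $ 2 * v $ 1 - u $ 1 * v $ 2"

definition transv :: "int ^ 2 \<Rightarrow> int ^ 2 \<Rightarrow> int ^ 2" where
  "transv c v = v + pairing v c *s c"

definition transv_mat :: "int ^ 2 \<Rightarrow> int ^ 2 ^ 2" where
  "transv_mat c = (\<chi> i j. transv c (axis j 1) $ i)"

definition matmod :: "nat \<Rightarrow> int ^ 2 ^ 2 \<Rightarrow> int ^ 2 ^ 2" where
  "matmod k X = (\<chi> i j. X $ i $ j mod 2 ^ k)"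

text \<open>2x2 matrices over Z_2 (= End(M \<otimes> Z_2)), represented as the inverse limit of
  matrices over Z/2^k: compatible sequences of reduced integer matrices.\<close>
definition compatible :: "(nat \<Rightarrow> int ^ 2 ^ 2) \<Rightarrow> bool" where
  "compatible A \<longleftrightarrow> (\<forall>k. matmod k (A k) = A k \<and> matmod k (A (Suc k)) = A k)"

definition symplectic :: "(nat \<Rightarrow> int ^ 2 ^ 2) \<Rightarrow> bool" where
  "symplectic A \<longleftrightarrow> (\<forall>k u v. pairing (A k *v u) (A k *v v) mod 2 ^ k = pairing u v mod 2 ^ k)"

definition Sp2 :: "(nat \<Rightarrow> int ^ 2 ^ 2) monoid" where
  "Sp2 = \<lparr> carrier = {A. compatible A \<and> symplectic A},
           mult = (\<lambda>A B. (\<lambda>k. matmod k (A k ** B k))),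
           one = (\<lambda>k. matmod k (mat 1)) \<rparr>"

definition embed :: "int ^ 2 ^ 2 \<Rightarrow> (nat \<Rightarrow> int ^ 2 ^ 2)" where
  "embed X = (\<lambda>k. matmod k X)"

definition Gamma2pow :: "nat \<Rightarrow> (nat \<Rightarrow> int ^ 2 ^ 2) set" where
  "Gamma2pow n = {A \<in> carrier Sp2. A n = matmod n (mat 1)}"

text \<open>Closed sets for the profinite (2-adic) topology: closure of C is the set of x
  agreeing with some element of C modulo every 2^k.\<close>
definition closed_Sp :: "(nat \<Rightarrow> int ^ 2 ^ 2) set \<Rightarrow> bool" where
  "closed_Sp C \<longleftrightarrow> C \<subseteq> carrier Sp2 \<and>
     (\<forall>x \<in> carrier Sp2. (\<forall>k. \<exists>y \<in> C. y k = x k) \<longrightarrow> x \<in> C)"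

definition topgen :: "(nat \<Rightarrow> int ^ 2 ^ 2) set \<Rightarrow> (nat \<Rightarrow> int ^ 2 ^ 2) set" where
  "topgen S = \<Inter> {H. subgroup H Sp2 \<and> closed_Sp H \<and> S \<subseteq> H}"

end

theory Submission
  imports Defs "HOL-Analysis.Determinants"
begin

text \<open>
  Write T_c = 1 + N_c with N_c v = \<langle>v, c\<rangle> c. Since N_c^2 = 0, the generator T_c^(2^n)
  equals 1 + 2^n N_c and so lies in the closed subgroup \<Gamma>(2^n). Conversely, the closed
  subgroup generated by the three elements contains every T_(c_i)^(2^k) = 1 + 2^k N_(c_i)
  with k \<ge> n, and for k \<ge> 1 one has (1 + 2^k A)(1 + 2^k B) \<equiv> 1 + 2^k (A + B) modulo
  2^(k+1). An integral matrix congruent to 1 modulo 2^k with determinant congruent to 1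
  modulo 2^(k+1) has the form 1 + 2^k Z with tr Z even, and modulo 2 the matrices N_(c_1),
  N_(c_2), N_(c_3) span exactly the trace-zero matrices. Hence every element of \<Gamma>(2^n) can
  be matched modulo 2^k, one level at a time, by a product of the generators, and
  closedness gives the reverse inclusion.
\<close>

lemma mat_nth: "mat a $ i $ j = (if i = j then a else 0)"
  by (simp add: mat_def)

lemma matrix_mult_2_nth:
  "((X::'a::semiring_1^2^2) ** Y) $ i $ j = X$i$1 * Y$1$j + X$i$2 * Y$2$j"
  by (simp add: matrix_matrix_mult_def sum_2)

lemma matrix_2_eqI:
  "(X::'a^2^2)$1$1 = Y$1$1 \<Longrightarrow> X$1$2 = Y$1$2 \<Longrightarrow> X$2$1 = Y$2$1 \<Longrightarrow> X$2$2 = Y$2$2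
    \<Longrightarrow> X = Y"
  by (simp add: vec_eq_iff forall_2)

lemma mat_mult_nth: "(mat q ** (A::'a::semiring_1^'n^'m)) $ i $ j = q * A$i$j"
  by (simp add: matrix_matrix_mult_def mat_nth if_distrib if_distribR cong: if_cong)

lemma matrix_diff_ldistrib: "A ** (B - C) = A ** B - A ** (C::'a::ring_1^'n^'m)"
  using matrix_add_ldistrib[of A "B - C" C] by (simp add: eq_diff_eq)

lemma trace_2: "trace (A::'a::semiring_1^2^2) = A$1$1 + A$2$2"
  by (simp add: trace_def sum_2)

definition adjugate2 :: "'a::comm_ring_1^2^2 \<Rightarrow> 'a^2^2" where
  "adjugate2 A = (\<chi> i j. if i = 1 then (if j = 1 then A$2$2 else - A$1$2)
                         else (if j = 1 then - A$2$1 else A$1$1))"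

lemma adjugate2_nth:
  "adjugate2 A $1$1 = A$2$2" "adjugate2 A $1$2 = - A$1$2"
  "adjugate2 A $2$1 = - A$2$1" "adjugate2 A $2$2 = A$1$1"
  by (simp_all add: adjugate2_def)

lemma adjugate2_mult:
  "adjugate2 A ** A = mat (det A)" "A ** adjugate2 A = mat (det A)"
  by (rule matrix_2_eqI; simp add: matrix_mult_2_nth adjugate2_nth mat_nth det_2 algebra_simps)+

lemma det_adjugate2: "det (adjugate2 A) = det A"
  by (simp add: det_2 adjugate2_nth algebra_simps)

definition dvd_entries :: "'a::comm_semiring_1 \<Rightarrow> 'a^'n^'m \<Rightarrow> bool" where
  "dvd_entries d A \<longleftrightarrow> (\<forall>i j. d dvd A$i$j)"

lemma dvd_entries_0 [simp]: "dvd_entries d 0"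
  by (simp add: dvd_entries_def)

lemma dvd_entries_add: "dvd_entries d A \<Longrightarrow> dvd_entries d B \<Longrightarrow> dvd_entries d (A + B)"
  by (simp add: dvd_entries_def)

lemma dvd_entries_mult_left:
  "dvd_entries d (A::'a::comm_semiring_1^'n^'m) \<Longrightarrow> dvd_entries d (P ** A)"
  by (simp add: dvd_entries_def matrix_matrix_mult_def dvd_sum)

lemma dvd_entries_mult_right:
  "dvd_entries d (A::'a::comm_semiring_1^'n^'m) \<Longrightarrow> dvd_entries d (A ** P)"
  by (simp add: dvd_entries_def matrix_matrix_mult_def dvd_sum)

lemma dvd_entries_scale:
  "dvd_entries d (A::'a::comm_semiring_1^'n^'m) \<Longrightarrow> dvd_entries (q * d) (mat q ** A)"
  by (simp add: dvd_entries_def mat_mult_nth mult_dvd_mono)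

lemma dvd_entries_trans:
  assumes "dvd_entries d ((A::'a::comm_ring_1^'n^'m) - B)" "dvd_entries d (B - C)"
  shows "dvd_entries d (A - C)"
  using dvd_entries_add[OF assms] by simp

lemma dvd_entriesE:
  fixes A :: "'a::algebraic_semidom^'n^'m"
  assumes "dvd_entries d A"
  obtains B where "A = mat d ** B"
proof
  show "A = mat d ** (\<chi> i j. A$i$j div d)"
    using assms unfolding dvd_entries_def by (simp add: vec_eq_iff mat_mult_nth)
qed

lemma dvd_entries_mult_near_one:
  fixes X Y A B :: "'a::comm_ring_1^2^2"
  assumes "d dvd q * q"
    and "dvd_entries d (X - (mat 1 + mat q ** A))" "dvd_entries d (Y - (mat 1 + mat q ** B))"
  shows "dvd_entries d (X ** Y - (mat 1 + mat q ** (A + B)))"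
proof -
  define D where "D = X - (mat 1 + mat q ** A)"
  define E where "E = Y - (mat 1 + mat q ** B)"
  have eq: "X ** Y - (mat 1 + mat q ** (A + B)) =
      D + E + mat (q * q) ** (A ** B) + (mat q ** A) ** E + D ** (mat q ** B) + D ** E"
    unfolding D_def E_def
    by (rule matrix_2_eqI) (simp_all add: matrix_mult_2_nth mat_mult_nth mat_nth algebra_simps)
  have "dvd_entries d (mat (q * q) ** (A ** B))"
    using assms(1) by (simp add: dvd_entries_def mat_mult_nth)
  moreover have "dvd_entries d D" "dvd_entries d E"
    using assms(2,3) by (simp_all add: D_def E_def)
  ultimately show ?thesis
    unfolding eq by (blast intro: dvd_entries_add dvd_entries_mult_left dvd_entries_mult_right)
qed

lemma det_one_plus_scaled:
  "det (mat 1 + mat q ** (Z::'a::comm_ring_1^2^2)) = 1 + q * trace Z + q * q * det Z"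
  by (simp add: det_2 trace_2 mat_mult_nth mat_nth algebra_simps)

lemma even_trace_if_det_cong:
  fixes q :: int and Z :: "int^2^2"
  assumes "even q" "q \<noteq> 0" and "det (mat 1 + mat q ** Z) mod (2 * q) = 1 mod (2 * q)"
  shows "even (trace Z)"
proof -
  have "2 * q dvd q * trace Z + q * q * det Z"
    using assms(3) by (simp add: det_one_plus_scaled mod_eq_dvd_iff)
  moreover have "2 * q dvd q * q * det Z"
    using assms(1) by (auto simp: mult.assoc)
  ultimately have "q * 2 dvd q * trace Z"
    by (metis add_diff_cancel_right' dvd_diff mult.commute)
  thus ?thesis using assms(2) by simp
qed

section \<open>Reduction modulo powers of 2 and the group Sp2\<close>

lemma matmod_nth: "matmod k X $ i $ j = X$i$j mod 2^k"
  by (simp add: matmod_def)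

lemma matmod_eq_iff_dvd_entries: "matmod k X = matmod k Y \<longleftrightarrow> dvd_entries (2^k) (X - Y)"
  by (simp add: matmod_def vec_eq_iff dvd_entries_def mod_eq_dvd_iff)

lemma matmod_matmod: "k \<le> m \<Longrightarrow> matmod k (matmod m X) = matmod k X"
  by (simp add: matmod_def vec_eq_iff mod_mod_cancel le_imp_power_dvd)

lemma matmod_idem [simp]: "matmod k (matmod k X) = matmod k X"
  by (simp add: matmod_matmod)

lemma matmod_mult_left: "matmod k (matmod k X ** Y) = matmod k (X ** Y)"
  unfolding matmod_def vec_eq_iff matrix_mult_2_nth
  by (auto intro!: mod_add_cong mod_mult_cong)

lemma matmod_mult_right: "matmod k (X ** matmod k Y) = matmod k (X ** Y)"
  unfolding matmod_def vec_eq_iff matrix_mult_2_nth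
  by (auto intro!: mod_add_cong mod_mult_cong)

lemma matmod_adjugate2: "matmod k (adjugate2 (matmod k X)) = matmod k (adjugate2 X)"
  by (rule matrix_2_eqI; simp add: matmod_nth adjugate2_nth mod_minus_eq)

lemma matmod_mat_cong: "d mod 2^k = e mod 2^k \<Longrightarrow> matmod k (mat d) = matmod k (mat e)"
  by (simp add: matmod_def mat_nth vec_eq_iff)

lemma det_matmod: "det (matmod k X) mod 2^k = det X mod 2^k"
  unfolding det_2 matmod_nth
  by (auto intro!: mod_diff_cong mod_mult_cong)

lemma pairing_matrix_vector_mult: "pairing (X *v u) (X *v v) = det X * pairing u v"
  by (simp add: pairing_def matrix_vector_mult_def sum_2 det_2 algebra_simps)

lemma symplectic_iff_det: "symplectic A \<longleftrightarrow> (\<forall>k. det (A k) mod 2^k = 1 mod 2^k)"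
proof
  assume sympl: "symplectic A"
  show "\<forall>k. det (A k) mod 2^k = 1 mod 2^k"
  proof
    fix k
    have "(det (A k) * pairing (axis 1 1) (axis 2 1)) mod 2^k = pairing (axis 1 1) (axis 2 1) mod 2^k"
      using sympl unfolding symplectic_def pairing_matrix_vector_mult by blast
    moreover have "pairing (axis 1 1) (axis 2 1) = -1"
      by (simp add: pairing_def axis_def)
    ultimately have "(- det (A k)) mod 2^k = (-1) mod 2^k"
      by simp
    thus "det (A k) mod 2^k = 1 mod 2^k"
      using mod_minus_cong[of "- det (A k)" "2^k" "-1"] by simp
  qed
next
  assume "\<forall>k. det (A k) mod 2^k = 1 mod 2^k"
  thus "symplectic A"
    unfolding symplectic_def pairing_matrix_vector_mult by (metis mod_mult_left_eq mult_1)
qed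

lemma compatible_matmod_le:
  assumes "compatible A" "k \<le> l" shows "matmod k (A l) = A k"
  using assms(2)
proof (induction l rule: dec_induct)
  case base
  show ?case using assms(1) by (simp add: compatible_def)
next
  case (step l)
  have "matmod k (A (Suc l)) = matmod k (matmod l (A (Suc l)))"
    using step.hyps by (simp add: matmod_matmod)
  also have "\<dots> = A k" using assms(1) step.IH by (simp add: compatible_def)
  finally show ?case .
qed

lemma compatible_mult:
  assumes "compatible A" "compatible B"
  shows "compatible (\<lambda>k. matmod k (A k ** B k))"
  unfolding compatible_def
proof (intro allI conjI)
  fix k
  show "matmod k (matmod k (A k ** B k)) = matmod k (A k ** B k)" by simp
  have "matmod k (matmod (Suc k) (A (Suc k) ** B (Suc k)))
      = matmod k (matmod k (A (Suc k)) ** matmod k (B (Suc k)))"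
    by (simp add: matmod_matmod matmod_mult_left matmod_mult_right)
  also have "\<dots> = matmod k (A k ** B k)" using assms by (simp add: compatible_def)
  finally show "matmod k (matmod (Suc k) (A (Suc k) ** B (Suc k))) = matmod k (A k ** B k)" .
qed

lemma symplectic_mult:
  assumes "symplectic A" "symplectic B"
  shows "symplectic (\<lambda>k. matmod k (A k ** B k))"
  unfolding symplectic_iff_det
proof
  fix k
  have "det (A k) mod 2^k = 1 mod 2^k" "det (B k) mod 2^k = 1 mod 2^k"
    using assms unfolding symplectic_iff_det by blast+
  hence "(det (A k) * det (B k)) mod 2^k = (1 * 1) mod 2^k"
    by (intro mod_mult_cong)
  thus "det (matmod k (A k ** B k)) mod 2^k = 1 mod 2^k"
    by (simp add: det_matmod det_mul)
qed

lemma compatible_adjugate2: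
  assumes "compatible A" shows "compatible (\<lambda>k. matmod k (adjugate2 (A k)))"
  unfolding compatible_def
proof (intro allI conjI)
  fix k
  show "matmod k (matmod k (adjugate2 (A k))) = matmod k (adjugate2 (A k))" by simp
  have "matmod k (matmod (Suc k) (adjugate2 (A (Suc k)))) = matmod k (adjugate2 (matmod k (A (Suc k))))"
    by (simp add: matmod_matmod matmod_adjugate2)
  also have "\<dots> = matmod k (adjugate2 (A k))" using assms by (simp add: compatible_def)
  finally show "matmod k (matmod (Suc k) (adjugate2 (A (Suc k)))) = matmod k (adjugate2 (A k))" .
qed

lemma symplectic_adjugate2:
  "symplectic A \<Longrightarrow> symplectic (\<lambda>k. matmod k (adjugate2 (A k)))"
  by (simp add: symplectic_iff_det det_matmod det_adjugate2)

lemma carrier_Sp2: "A \<in> carrier Sp2 \<longleftrightarrow> compatible A \<and> symplectic A"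
  by (simp add: Sp2_def)

lemma mult_Sp2: "A \<otimes>\<^bsub>Sp2\<^esub> B = (\<lambda>k. matmod k (A k ** B k))"
  by (simp add: Sp2_def)

lemma one_Sp2: "\<one>\<^bsub>Sp2\<^esub> = (\<lambda>k. matmod k (mat 1))"
  by (simp add: Sp2_def)

lemma embed_in_carrier: "det X = 1 \<Longrightarrow> embed X \<in> carrier Sp2"
  by (simp add: embed_def carrier_Sp2 compatible_def symplectic_iff_det matmod_matmod det_matmod)

lemma embed_mult: "embed X \<otimes>\<^bsub>Sp2\<^esub> embed Y = embed (X ** Y)"
  by (simp add: embed_def mult_Sp2 matmod_mult_left matmod_mult_right)

lemma embed_one: "embed (mat 1) = \<one>\<^bsub>Sp2\<^esub>"
  by (simp add: embed_def one_Sp2)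

lemma group_Sp2: "group Sp2"
proof (rule groupI)
  show "\<one>\<^bsub>Sp2\<^esub> \<in> carrier Sp2"
    using embed_in_carrier[of "mat 1"] by (simp add: embed_one)
next
  fix A B assume "A \<in> carrier Sp2" "B \<in> carrier Sp2"
  thus "A \<otimes>\<^bsub>Sp2\<^esub> B \<in> carrier Sp2"
    by (simp add: carrier_Sp2 mult_Sp2 compatible_mult symplectic_mult)
next
  fix A B C
  show "A \<otimes>\<^bsub>Sp2\<^esub> B \<otimes>\<^bsub>Sp2\<^esub> C = A \<otimes>\<^bsub>Sp2\<^esub> (B \<otimes>\<^bsub>Sp2\<^esub> C)"
    by (simp add: mult_Sp2 matmod_mult_left matmod_mult_right matrix_mul_assoc)
next
  fix A assume "A \<in> carrier Sp2"
  thus "\<one>\<^bsub>Sp2\<^esub> \<otimes>\<^bsub>Sp2\<^esub> A = A"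
    by (simp add: carrier_Sp2 mult_Sp2 one_Sp2 matmod_mult_left compatible_def)
next
  fix A assume A: "A \<in> carrier Sp2"
  define A' where "A' = (\<lambda>k. matmod k (adjugate2 (A k)))"
  have "A' \<in> carrier Sp2"
    using A by (simp add: A'_def carrier_Sp2 compatible_adjugate2 symplectic_adjugate2)
  moreover have "matmod k (A' k ** A k) = matmod k (mat 1)" for k
  proof -
    have "det (A k) mod 2^k = 1 mod 2^k"
      using A by (simp add: carrier_Sp2 symplectic_iff_det)
    thus ?thesis
      by (simp add: A'_def matmod_mult_left adjugate2_mult matmod_mat_cong)
  qed
  ultimately show "\<exists>A'\<in>carrier Sp2. A' \<otimes>\<^bsub>Sp2\<^esub> A = \<one>\<^bsub>Sp2\<^esub>"
    by (auto simp: mult_Sp2 one_Sp2)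
qed

lemma subgroup_nat_pow_closed:
  assumes "subgroup H G" "h \<in> H" shows "h [^]\<^bsub>G\<^esub> (m :: nat) \<in> H"
  by (induction m) (simp_all add: subgroup.one_closed[OF assms(1)] subgroup.m_closed[OF assms(1) _ assms(2)])

lemma subgroup_Gamma2pow: "subgroup (Gamma2pow n) Sp2"
proof (rule group.subgroupI[OF group_Sp2])
  show "Gamma2pow n \<subseteq> carrier Sp2" by (auto simp: Gamma2pow_def)
  show "Gamma2pow n \<noteq> {}"
    using group.is_monoid[OF group_Sp2] by (auto simp: Gamma2pow_def one_Sp2 intro!: monoid.one_closed)
next
  fix A B assume "A \<in> Gamma2pow n" "B \<in> Gamma2pow n"
  thus "A \<otimes>\<^bsub>Sp2\<^esub> B \<in> Gamma2pow n"
    by (simp add: Gamma2pow_def group.is_monoid[OF group_Sp2] monoid.m_closed)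
       (simp add: mult_Sp2 matmod_mult_left matmod_mult_right)
next
  fix A assume A: "A \<in> Gamma2pow n"
  have A_carrier: "A \<in> carrier Sp2" and A_n: "A n = matmod n (mat 1)"
    using A by (auto simp: Gamma2pow_def)
  define A' where "A' = inv\<^bsub>Sp2\<^esub> A"
  have A'_carrier: "A' \<in> carrier Sp2"
    using A_carrier by (simp add: A'_def group.inv_closed[OF group_Sp2])
  have "A' n = matmod n (A' n ** A n)"
    using A'_carrier by (simp add: A_n carrier_Sp2 compatible_def matmod_mult_right)
  also have "\<dots> = (A' \<otimes>\<^bsub>Sp2\<^esub> A) n"
    by (simp add: mult_Sp2)
  also have "\<dots> = matmod n (mat 1)"
    using A_carrier by (simp add: A'_def group.l_inv[OF group_Sp2] one_Sp2)
  finally show "inv\<^bsub>Sp2\<^esub> A \<in> Gamma2pow n"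
    using A'_carrier by (simp add: A'_def Gamma2pow_def)
qed

lemma closed_Gamma2pow: "closed_Sp (Gamma2pow n)"
  unfolding closed_Sp_def Gamma2pow_def by auto metis

section \<open>Transvections\<close>

text \<open>The nilpotent part N_c of T_c; \<langle>c, c\<rangle> = 0 gives N_c^2 = 0.\<close>

definition transv_nil :: "int^2 \<Rightarrow> int^2^2" where
  "transv_nil c = (\<chi> i j. c$i * pairing (axis j 1) c)"

lemma transv_nil_nth:
  "transv_nil c $1$1 = - c$1 * c$2" "transv_nil c $1$2 = c$1 * c$1"
  "transv_nil c $2$1 = - c$2 * c$2" "transv_nil c $2$2 = c$2 * c$1"
  by (simp_all add: transv_nil_def pairing_def axis_def)

lemma transv_mat_eq: "transv_mat c = mat 1 + transv_nil c"
  by (rule matrix_2_eqI)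
     (simp_all add: transv_mat_def transv_def transv_nil_nth mat_nth pairing_def axis_def algebra_simps)

lemma embed_transv_mat_pow:
  "embed (transv_mat c) [^]\<^bsub>Sp2\<^esub> m = embed (mat 1 + mat (int m) ** transv_nil c)"
proof (induction m)
  case 0
  show ?case by (simp add: embed_one)
next
  case (Suc m)
  have "(mat 1 + mat (int m) ** transv_nil c) ** transv_mat c = mat 1 + mat (int (Suc m)) ** transv_nil c"
    unfolding transv_mat_eq
    by (rule matrix_2_eqI) (simp_all add: matrix_mult_2_nth mat_mult_nth transv_nil_nth mat_nth algebra_simps)
  thus ?case
    by (simp add: Suc.IH embed_mult)
qed

lemma det_transv_mat_pow: "det (mat 1 + mat q ** transv_nil c) = 1"
  by (simp add: det_2 mat_mult_nth transv_nil_nth mat_nth algebra_simps)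

lemma transv_mat_pow_in_Gamma2pow:
  "embed (transv_mat c) [^]\<^bsub>Sp2\<^esub> (2^n :: nat) \<in> Gamma2pow n"
proof -
  have "matmod n (mat 1 + mat (2^n) ** transv_nil c) = matmod n (mat 1)"
    by (simp add: matmod_eq_iff_dvd_entries dvd_entries_def mat_mult_nth)
  thus ?thesis
    unfolding embed_transv_mat_pow
    using embed_in_carrier[OF det_transv_mat_pow] by (simp add: Gamma2pow_def embed_def)
qed

section \<open>Successive approximation\<close>

locale mod2_basis_triple =
  fixes c1 c2 c3 :: "int^2"
  assumes c1_mod2: "\<forall>i. 2 dvd (c1 - (a1 + b1)) $ i"
    and c2_mod2: "\<forall>i. 2 dvd (c2 - b1) $ i"
    and c3_mod2: "\<forall>i. 2 dvd (c3 - a1) $ i"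
begin

lemma parities:
  "odd (c1$1)" "odd (c1$2)" "even (c2$1)" "odd (c2$2)" "odd (c3$1)" "even (c3$2)"
  using c1_mod2[rule_format, of 1] c1_mod2[rule_format, of 2]
    c2_mod2[rule_format, of 1] c2_mod2[rule_format, of 2]
    c3_mod2[rule_format, of 1] c3_mod2[rule_format, of 2]
  by (simp_all add: a1_def b1_def axis_def)

text \<open>Modulo 2 the three nilpotents are \<open>[[1,1],[1,1]]\<close>, \<open>[[0,0],[1,0]]\<close> and
  \<open>[[0,1],[0,0]]\<close>, a basis of the trace-zero matrices over GF(2).\<close>

lemma transv_nil_span_mod2:
  assumes "even (trace Z)"
  obtains A1 A2 A3 where "A1 \<in> {0, transv_nil c1}" "A2 \<in> {0, transv_nil c2}" "A3 \<in> {0, transv_nil c3}"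
    and "dvd_entries 2 (A1 + A2 + A3 - Z)"
proof -
  define e1 :: int where "e1 = (if odd (Z$1$1) then 1 else 0)"
  define e2 :: int where "e2 = (if odd (Z$2$1 - Z$1$1) then 1 else 0)"
  define e3 :: int where "e3 = (if odd (Z$1$2 - Z$1$1) then 1 else 0)"
  have "dvd_entries 2 (mat e1 ** transv_nil c1 + mat e2 ** transv_nil c2 + mat e3 ** transv_nil c3 - Z)"
    unfolding dvd_entries_def forall_2 using parities assms
    by (simp add: mat_mult_nth transv_nil_nth trace_2 e1_def e2_def e3_def)
  then show thesis
    by (intro that) (auto simp: e1_def e2_def e3_def)
qed

end

text \<open>\<open>R\<close> models the integral matrices of determinant 1 whose image lies in a closed
  subgroup containing the three generators.\<close>

locale transvection_submonoid = mod2_basis_triple +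
  fixes n :: nat and R :: "(int^2^2) set"
  assumes level_pos: "1 \<le> n"
    and one_mem: "mat 1 \<in> R"
    and mult_mem: "V \<in> R \<Longrightarrow> W \<in> R \<Longrightarrow> V ** W \<in> R"
    and det_mem: "W \<in> R \<Longrightarrow> det W = 1"
    and transv_mem: "c \<in> {c1, c2, c3} \<Longrightarrow> n \<le> k \<Longrightarrow> mat 1 + mat (2^k) ** transv_nil c \<in> R"
begin

lemma lift_step:
  assumes "n \<le> k" "even (trace Z)"
  shows "\<exists>V\<in>R. dvd_entries (2^Suc k) (V - (mat 1 + mat (2^k) ** Z))"
proof -
  define q :: int where "q = 2^k"
  obtain A1 A2 A3 where A: "A1 \<in> {0, transv_nil c1}" "A2 \<in> {0, transv_nil c2}" "A3 \<in> {0, transv_nil c3}"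
    and A_Z: "dvd_entries 2 (A1 + A2 + A3 - Z)"
    using transv_nil_span_mod2[OF assms(2)] by blast
  have mem: "mat 1 + mat q ** A \<in> R" if "A \<in> {0, transv_nil c}" "c \<in> {c1, c2, c3}" for A c
    using that one_mem transv_mem[OF _ assms(1)] by (auto simp: q_def)
  define V where "V = (mat 1 + mat q ** A1) ** (mat 1 + mat q ** A2) ** (mat 1 + mat q ** A3)"
  have "V \<in> R"
    unfolding V_def using A by (intro mult_mem mem) auto
  have "(2::int)^Suc k dvd 2^(k + k)"
    using level_pos assms(1) by (intro le_imp_power_dvd) simp
  hence "2^Suc k dvd q * q"
    by (simp add: q_def power_add)
  hence "dvd_entries (2^Suc k) (V - (mat 1 + mat q ** (A1 + A2 + A3)))"
    unfolding V_def by (intro dvd_entries_mult_near_one) simp_all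
  moreover have "dvd_entries (2^Suc k) ((mat 1 + mat q ** (A1 + A2 + A3)) - (mat 1 + mat q ** Z))"
  proof -
    have "(mat 1 + mat q ** (A1 + A2 + A3)) - (mat 1 + mat q ** Z) = mat q ** (A1 + A2 + A3 - Z)"
      by (rule matrix_2_eqI) (simp_all add: mat_mult_nth algebra_simps)
    thus ?thesis
      using dvd_entries_scale[OF A_Z, of q] by (simp add: q_def mult.commute)
  qed
  ultimately show ?thesis
    using \<open>V \<in> R\<close> dvd_entries_trans unfolding q_def by blast
qed

lemma approximation_step:
  assumes "n \<le> k" "W \<in> R" "matmod k W = matmod k X" "det X mod 2^Suc k = 1 mod 2^Suc k"
  shows "\<exists>W'\<in>R. matmod (Suc k) W' = matmod (Suc k) X"
proof -
  define q :: int where "q = 2^k"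
  define Y where "Y = adjugate2 W ** X"
  have inverse: "adjugate2 W ** W = mat 1" "W ** adjugate2 W = mat 1"
    using adjugate2_mult[of W] det_mem[OF assms(2)] by simp_all
  have W_Y: "W ** Y = X"
    by (simp add: Y_def matrix_mul_assoc inverse)
  have "dvd_entries q (X - W)"
    using assms(3)[symmetric] by (simp add: q_def matmod_eq_iff_dvd_entries)
  hence "dvd_entries q (Y - mat 1)"
    using dvd_entries_mult_left[of q "X - W" "adjugate2 W"]
    by (simp add: Y_def matrix_diff_ldistrib inverse)
  then obtain Z where Z: "Y = mat 1 + mat q ** Z"
    by (metis dvd_entriesE add.commute diff_add_cancel)
  have "det (mat 1 + mat q ** Z) = det X"
    using det_mem[OF assms(2)] by (simp add: Z[symmetric] Y_def det_mul det_adjugate2)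
  hence "even (trace Z)"
    using assms(1,4) level_pos by (intro even_trace_if_det_cong[of q]) (auto simp: q_def)
  then obtain V where "V \<in> R" and V: "dvd_entries (2^Suc k) (V - Y)"
    using lift_step[OF assms(1)] unfolding Z q_def by blast
  have "dvd_entries (2^Suc k) (W ** V - X)"
    using dvd_entries_mult_left[OF V, of W] by (simp add: matrix_diff_ldistrib W_Y)
  thus ?thesis
    using mult_mem[OF assms(2) \<open>V \<in> R\<close>] by (auto simp: matmod_eq_iff_dvd_entries)
qed

lemma approximation:
  assumes "matmod n X = matmod n (mat 1)" "det X mod 2^k = 1 mod 2^k"
  shows "\<exists>W\<in>R. matmod k W = matmod k X"
  using assms(2)
proof (induction k)
  case 0
  show ?case using one_mem by (auto simp: matmod_def)
next
  case (Suc k)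
  show ?case
  proof (cases "Suc k \<le> n")
    case True
    hence "matmod (Suc k) (mat 1) = matmod (Suc k) X"
      using assms(1) by (metis matmod_matmod)
    thus ?thesis using one_mem by blast
  next
    case False
    have "det X mod 2^k = 1 mod 2^k"
      using Suc.prems by (metis le_imp_power_dvd le_SucI mod_mod_cancel order_refl)
    then obtain W where "W \<in> R" "matmod k W = matmod k X"
      using Suc.IH by blast
    thus ?thesis
      using approximation_step False Suc.prems by simp
  qed
qed

lemma Gamma2pow_approx:
  assumes "A \<in> Gamma2pow n" shows "\<exists>W\<in>R. matmod k W = A k"
proof -
  \<comment> \<open>Approximate \<open>A (k + n)\<close> rather than \<open>A k\<close>: only at levels \<open>\<ge> n\<close> is the
    congruence to 1 modulo \<open>2\<^sup>n\<close> visible.\<close>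
  have A: "compatible A" "symplectic A" "A n = matmod n (mat 1)"
    using assms by (auto simp: Gamma2pow_def carrier_Sp2)
  have "matmod n (A (k + n)) = matmod n (mat 1)"
    using compatible_matmod_le[OF A(1)] A(3) by simp
  moreover have "det (A (k + n)) mod 2^k = 1 mod 2^k"
    using A(2) unfolding symplectic_iff_det
    by (metis le_add1 le_imp_power_dvd mod_mod_cancel)
  ultimately obtain W where "W \<in> R" "matmod k W = matmod k (A (k + n))"
    using approximation by blast
  thus ?thesis
    using compatible_matmod_le[OF A(1), of k "k + n"] by auto
qed

end

lemma (in mod2_basis_triple) Gamma2pow_subset_closed_subgroup:
  assumes "1 \<le> n" and H: "subgroup H Sp2" "closed_Sp H"
    and gens: "\<And>c. c \<in> {c1, c2, c3} \<Longrightarrow> embed (transv_mat c) [^]\<^bsub>Sp2\<^esub> (2^n :: nat) \<in> H"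
  shows "Gamma2pow n \<subseteq> H"
proof -
  interpret transvection_submonoid c1 c2 c3 n "{W. det W = 1 \<and> embed W \<in> H}"
  proof unfold_locales
    show "mat 1 \<in> {W. det W = 1 \<and> embed W \<in> H}"
      using subgroup.one_closed[OF H(1)] by (simp add: embed_one)
    show "V ** W \<in> {W. det W = 1 \<and> embed W \<in> H}"
      if "V \<in> {W. det W = 1 \<and> embed W \<in> H}" "W \<in> {W. det W = 1 \<and> embed W \<in> H}" for V W
      using that subgroup.m_closed[OF H(1)] by (simp add: det_mul flip: embed_mult)
    fix c and k :: nat
    assume "c \<in> {c1, c2, c3}" "n \<le> k"
    then have "(embed (transv_mat c) [^]\<^bsub>Sp2\<^esub> (2^n :: nat)) [^]\<^bsub>Sp2\<^esub> (2^(k - n) :: nat) \<in> H"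
      using subgroup_nat_pow_closed[OF H(1) gens] by simp
    moreover have "embed (transv_mat c) \<in> carrier Sp2"
      using embed_in_carrier[OF det_transv_mat_pow, of 1 c] by (simp add: transv_mat_eq)
    ultimately have "embed (transv_mat c) [^]\<^bsub>Sp2\<^esub> (2^k :: nat) \<in> H"
      using \<open>n \<le> k\<close> by (simp add: monoid.nat_pow_pow[OF group.is_monoid[OF group_Sp2]] flip: power_add)
    then show "mat 1 + mat (2^k) ** transv_nil c \<in> {W. det W = 1 \<and> embed W \<in> H}"
      by (simp add: embed_transv_mat_pow det_transv_mat_pow)
  qed (use assms(1) in auto)
  show ?thesis
  proof
    fix A assume A: "A \<in> Gamma2pow n"
    have "\<exists>B\<in>H. B k = A k" for k
      using Gamma2pow_approx[OF A, of k] by (auto simp: embed_def)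
    thus "A \<in> H"
      using H(2) A unfolding closed_Sp_def Gamma2pow_def by blast
  qed
qed

theorem proposition3p3:
  fixes c1 c2 c3 :: "int ^ 2" and n :: nat
  assumes "\<forall>i. 2 dvd (c1 - (a1 + b1)) $ i"
    and "\<forall>i. 2 dvd (c2 - b1) $ i"
    and "\<forall>i. 2 dvd (c3 - a1) $ i"
    and "n \<ge> 1"
  shows "topgen {embed (transv_mat c1) [^]\<^bsub>Sp2\<^esub> (2 ^ n :: nat),
                 embed (transv_mat c2) [^]\<^bsub>Sp2\<^esub> (2 ^ n :: nat),
                 embed (transv_mat c3) [^]\<^bsub>Sp2\<^esub> (2 ^ n :: nat)} = Gamma2pow n"
    (is "topgen ?S = _")
proof -
  interpret mod2_basis_triple c1 c2 c3
    using assms(1-3) by unfold_locales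
  show ?thesis
    unfolding topgen_def
  proof (rule antisym)
    show "\<Inter> {H. subgroup H Sp2 \<and> closed_Sp H \<and> ?S \<subseteq> H} \<subseteq> Gamma2pow n"
      by (rule Inter_lower) (simp add: subgroup_Gamma2pow closed_Gamma2pow transv_mat_pow_in_Gamma2pow)
    show "Gamma2pow n \<subseteq> \<Inter> {H. subgroup H Sp2 \<and> closed_Sp H \<and> ?S \<subseteq> H}"
      using Gamma2pow_subset_closed_subgroup[OF assms(4)] by (intro Inter_greatest) auto
  qed
qed

end
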